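(* Let $\sigma$ be the spectral measure of the Thue–Morse sequence. Then $\sigma^{(p)}\perp\sigma^{(q)}$ for any two distinct odd positive integers $p\neq q$.
   Context: Let $s_2(n)$ be the number of $1$s in the binary expansion of $n\ge0$ and $m_n=(-1)^{s_2(n)}$. The spectral measure $\sigma$ is the probability measure on the unit circle with Fourier coefficients $\hat\sigma(k)=\lim_{N\to\infty}\frac1N\sum_{n=1}^N m_{n+k}m_n$ for $k\ge0$ and $\hat\sigma(-k)=\hat\sigma(k)$. For $m\ge1$, $\sigma^{(m)}$ is the image of $\sigma$ under $z\mapsto z^m$. *)

theory Defs
  imports "HOL-Probability.Probability"
begin

fun s2 :: "nat \<Rightarrow> nat" where
  "s2 n = (if n = 0 then 0 else n mod 2 + s2 (n div 2))"

definition tm :: "nat \<Rightarrow> real" where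
  "tm n = (-1) ^ s2 n"

text \<open>sigma is the spectral measure of the Thue--Morse sequence: a probability
  measure on the Borel sets of the complex plane, concentrated on the unit circle,
  whose Fourier coefficients hat sigma(k) = integral of conj(z)^k, for k >= 0, equal the
  correlation limits lim (1/N) sum_{n=1}^N m_{n+k} m_n, and hat sigma(-k) = hat sigma(k).\<close>
definition TM_spectral_measure :: "complex measure \<Rightarrow> bool" where
  "TM_spectral_measure \<sigma> \<longleftrightarrow>
     sets \<sigma> = sets borel \<and> prob_space \<sigma> \<and> \<sigma> (sphere 0 1) = 1 \<and>
     (\<forall>k::nat.
        ((\<lambda>N. complex_of_real ((1 / real N) * (\<Sum>n=1..N. tm (n + k) * tm n)))
            \<longlonglongrightarrow> (\<integral>z. (cnj z) ^ k \<partial>\<sigma>)) \<and>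
        (\<integral>z. z ^ k \<partial>\<sigma>) = (\<integral>z. (cnj z) ^ k \<partial>\<sigma>))"

text \<open>Image measure sigma^(m) of sigma under z \<mapsto> z^m.\<close>
definition power_image :: "complex measure \<Rightarrow> nat \<Rightarrow> complex measure" where
  "power_image \<sigma> m = distr \<sigma> borel (\<lambda>z. z ^ m)"

definition mutually_singular :: "'a measure \<Rightarrow> 'a measure \<Rightarrow> bool" where
  "mutually_singular \<mu> \<nu> \<longleftrightarrow>
     (\<exists>A \<in> sets \<mu>. \<mu> A = 0 \<and> \<nu> (space \<nu> - A) = 0)"

end

theory Submission
  imports Defs "HOL-Number_Theory.Number_Theory"
begin

text \<open>
  The Fourier coefficients \<open>g k\<close> of \<open>\<sigma>\<close> inherit from the Thue--Morse correlations the
  relations \<open>g (2 * k) = g k\<close> and \<open>g (2 * k + 1) = - (g k + g (k + 1)) / 2\<close>. They make the doubling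
  map mixing for \<open>\<sigma>\<close>: the correlation \<open>g (u * (2 ^ d - 1))\<close> of \<open>z ^ (u * 2 ^ d)\<close> with \<open>z ^ u\<close>
  tends to \<open>(g u)\<^sup>2\<close> geometrically fast. A second moment bound and Borel--Cantelli then show that
  for \<open>\<sigma>\<close>-almost every \<open>z\<close> the averages of \<open>z ^ (u * 2 ^ k)\<close> over \<open>k < 2 ^ j\<close> tend to \<open>g u\<close>.
  Read on \<open>w = z ^ p\<close>: for almost every \<open>w\<close> with respect to \<open>power_image \<sigma> p\<close> the averages of
  \<open>w ^ (r * 2 ^ k)\<close> tend to \<open>g (p * r)\<close>, so \<open>power_image \<sigma> p\<close> and \<open>power_image \<sigma> q\<close> are mutually
  singular as soon as \<open>g (p * r) \<noteq> g (q * r)\<close> for some \<open>r\<close>.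

  For odd \<open>p > q\<close> such an \<open>r\<close> exists. With \<open>2 ^ K\<close> congruent to 1 modulo \<open>p\<close>, choose \<open>r\<close> with
  \<open>p * r = 2 ^ (8 * K) - 1\<close>, a string of ones in binary, whence \<open>g (p * r) > 1 / 9\<close>. Then the binary
  expansion of \<open>q * r\<close> consists of eight copies of a \<open>K\<close>-digit word which is neither \<open>0\<dots>0\<close> nor
  \<open>1\<dots>1\<close>; appending two copies of such a word to the expansion of \<open>n\<close> at least halves
  \<open>max \<bar>g n\<bar> \<bar>g (n + 1)\<bar>\<close>, so \<open>\<bar>g (q * r)\<bar> \<le> 1 / 16\<close>.
\<close>

section \<open>Thue--Morse correlations\<close>

declare s2.simps [simp del] \<comment> \<open>the recursion equation of \<open>s2\<close> loops as a rewrite rule\<close>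

lemma s2_double: "s2 (2 * n) = s2 n"
  by (cases "n = 0") (simp_all add: s2.simps[of "2 * n"])

lemma s2_Suc_double: "s2 (2 * n + 1) = s2 n + 1"
  by (subst s2.simps) simp

lemma tm_double: "tm (2 * n) = tm n"
  by (simp add: tm_def s2_double)

lemma tm_Suc_double: "tm (2 * n + 1) = - tm n"
  unfolding tm_def s2_Suc_double by simp

lemma abs_tm [simp]: "\<bar>tm n\<bar> = 1"
  by (simp add: tm_def)

lemma tm_mult_self: "tm n * tm n = 1"
  by (metis abs_mult_self_eq abs_tm mult_1)

definition tm_corr :: "nat \<Rightarrow> nat \<Rightarrow> real" where
  "tm_corr k N = (\<Sum>n<N. tm (n + k) * tm n)"

lemma tm_corr_0: "tm_corr 0 N = N"
  by (simp add: tm_corr_def tm_mult_self)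

lemma sum_lessThan_double:
  fixes f :: "nat \<Rightarrow> 'a::comm_monoid_add"
  shows "(\<Sum>n<2 * N. f n) = (\<Sum>n<N. f (2 * n) + f (2 * n + 1))"
  by (induction N) (simp_all add: algebra_simps)

lemma tm_corr_double: "tm_corr (2 * k) (2 * N) = 2 * tm_corr k N"
proof -
  have "2 * n + 2 * k = 2 * (n + k)" "2 * n + 1 + 2 * k = 2 * (n + k) + 1" for n :: nat
    by simp_all
  then show ?thesis
    by (simp only: tm_corr_def sum_lessThan_double tm_double tm_Suc_double sum_distrib_left)
      (simp add: mult.commute)
qed

lemma tm_corr_Suc_double: "tm_corr (2 * k + 1) (2 * N) = - (tm_corr k N + tm_corr (k + 1) N)"
proof -
  have "2 * n + (2 * k + 1) = 2 * (n + k) + 1" "2 * n + 1 + (2 * k + 1) = 2 * (n + (k + 1))"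
    for n :: nat
    by simp_all
  then show ?thesis
    by (simp only: tm_corr_def sum_lessThan_double tm_double tm_Suc_double)
      (simp add: sum_subtractf sum_negf)
qed

lemma tm_corr_average_tendsto:
  assumes "(\<lambda>N. (1 / real N) * (\<Sum>n=1..N. tm (n + k) * tm n)) \<longlonglongrightarrow> l"
  shows "(\<lambda>N. tm_corr k N / real N) \<longlonglongrightarrow> l"
proof -
  have "tm_corr k N = (\<Sum>n=1..N. tm (n + k) * tm n) + (tm k * tm 0 - tm (N + k) * tm N)" for N
    by (induction N) (simp_all add: tm_corr_def)
  then have eq: "tm_corr k N / real N
      = (1 / real N) * (\<Sum>n=1..N. tm (n + k) * tm n) + (tm k * tm 0 - tm (N + k) * tm N) / real N"
    for N
    by (simp add: add_divide_distrib)
  have lim0: "(\<lambda>N. (tm k * tm 0 - tm (N + k) * tm N) / real N) \<longlonglongrightarrow> 0"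
  proof (rule Lim_null_comparison)
    have "\<bar>tm k * tm 0 - tm (N + k) * tm N\<bar> \<le> 2" for N
      using abs_triangle_ineq4[of "tm k * tm 0" "tm (N + k) * tm N"] by (simp add: abs_mult)
    then show "\<forall>\<^sub>F N in sequentially. norm ((tm k * tm 0 - tm (N + k) * tm N) / real N) \<le> 2 / real N"
      by (intro always_eventually allI) (simp add: divide_right_mono)
  qed (rule lim_const_over_n)
  show ?thesis
    using tendsto_add[OF assms lim0] unfolding eq by simp
qed

lemma abs_neg_half_sum_le:
  fixes x y c :: real
  shows "\<bar>x\<bar> \<le> c \<Longrightarrow> \<bar>y\<bar> \<le> c \<Longrightarrow> \<bar>- (x + y) / 2\<bar> \<le> c"
  using abs_triangle_ineq[of x y] by simp

lemma abs_lin_comb_le: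
  fixes a b x y W c :: real
  assumes "\<bar>x\<bar> \<le> W" "\<bar>y\<bar> \<le> W" "\<bar>a\<bar> + \<bar>b\<bar> \<le> c"
  shows "\<bar>a * x + b * y\<bar> \<le> c * W"
proof -
  have "\<bar>a * x + b * y\<bar> \<le> \<bar>a\<bar> * \<bar>x\<bar> + \<bar>b\<bar> * \<bar>y\<bar>"
    by (metis abs_mult abs_triangle_ineq)
  also have "\<dots> \<le> (\<bar>a\<bar> + \<bar>b\<bar>) * W"
    using assms(1,2) by (simp add: distrib_right add_mono mult_left_mono)
  also have "\<dots> \<le> c * W"
    using assms by (intro mult_right_mono) auto
  finally show ?thesis .
qed

text \<open>The two linear forms in \<open>g n\<close> and \<open>g (n + 1)\<close> produced by the digit patterns \<open>10\<dots>01\<close>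
  and \<open>01\<dots>10\<close> with \<open>k\<close> inner digits, where \<open>t = (- 1 / 2) ^ k\<close>.\<close>
lemma pattern_coefficient_bounds:
  fixes x y t W :: real
  assumes xy: "\<bar>x\<bar> \<le> W" "\<bar>y\<bar> \<le> W" and t: "- 1 / 2 \<le> t" "t \<le> 1 / 4"
  shows "\<bar>(1 - t) / 6 * x + (1 + 5 * t) / 6 * y\<bar> \<le> W / 2"
    and "\<bar>- (x + y) / 2 + ((1 - t) / 6 * x + (1 + 5 * t) / 6 * y)\<bar> \<le> W"
proof -
  have "\<bar>(1 - t) / 6\<bar> + \<bar>(1 + 5 * t) / 6\<bar> \<le> 1 / 2"
    using t by (auto simp: abs_if divide_simps)
  from abs_lin_comb_le[OF xy this] show "\<bar>(1 - t) / 6 * x + (1 + 5 * t) / 6 * y\<bar> \<le> W / 2"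
    by simp
  have "\<bar>(- 2 - t) / 6\<bar> + \<bar>(- 2 + 5 * t) / 6\<bar> \<le> 1"
    using t by (auto simp: abs_if divide_simps)
  from abs_lin_comb_le[OF xy this]
  show "\<bar>- (x + y) / 2 + ((1 - t) / 6 * x + (1 + 5 * t) / 6 * y)\<bar> \<le> W"
    by (simp add: field_simps)
qed

lemma neg_half_power_bounds: "1 \<le> k \<Longrightarrow> - 1 / 2 \<le> (- 1 / 2 :: real) ^ k \<and> (- 1 / 2 :: real) ^ k \<le> 1 / 4"
  by (induction k rule: dec_induct) auto

lemma sum_pow_half_diff_le: "(\<Sum>k<N. (1 / 2 :: real) ^ (N - k)) \<le> 1"
proof (induction N)
  case (Suc N)
  have "(\<Sum>k<Suc N. (1 / 2 :: real) ^ (Suc N - k)) = (\<Sum>k<Suc N. (1 / 2) * (1 / 2) ^ (N - k))"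
    by (intro sum.cong refl) (simp add: Suc_diff_le)
  also have "\<dots> = (1 / 2) * (\<Sum>k<Suc N. (1 / 2) ^ (N - k))"
    by (simp only: sum_distrib_left)
  also have "\<dots> = (1 / 2) * ((\<Sum>k<N. (1 / 2) ^ (N - k)) + 1)"
    by simp
  finally show ?case
    using Suc.IH by simp
qed simp

lemma sum_sum_pow_half_absdiff_le: "(\<Sum>j<N. \<Sum>k<N. (1 / 2 :: real) ^ nat \<bar>int j - int k\<bar>) \<le> 3 * N"
proof (induction N)
  case (Suc N)
  have row: "(\<Sum>k<N. (1 / 2 :: real) ^ nat \<bar>int N - int k\<bar>) = (\<Sum>k<N. (1 / 2) ^ (N - k))"
    and col: "(\<Sum>j<N. (1 / 2 :: real) ^ nat \<bar>int j - int N\<bar>) = (\<Sum>k<N. (1 / 2) ^ (N - k))"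
    by (intro sum.cong refl; simp add: nat_diff_distrib)+
  have "(\<Sum>j<Suc N. \<Sum>k<Suc N. (1 / 2 :: real) ^ nat \<bar>int j - int k\<bar>)
      = (\<Sum>j<N. \<Sum>k<N. (1 / 2) ^ nat \<bar>int j - int k\<bar>)
        + (\<Sum>j<N. (1 / 2) ^ nat \<bar>int j - int N\<bar>) + (\<Sum>k<N. (1 / 2) ^ nat \<bar>int N - int k\<bar>) + 1"
    by (simp add: sum.distrib)
  also have "\<dots> \<le> 3 * N + 1 + 1 + 1"
    using Suc.IH sum_pow_half_diff_le[of N] unfolding row col by linarith
  also have "\<dots> = real (3 * Suc N)"
    by simp
  finally show ?case .
qed simp

section \<open>A multiplier separating odd numbers in binary\<close>

text \<open>The number whose binary expansion is the \<open>K\<close>-digit expansion of \<open>c\<close> repeated \<open>2 * j\<close>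
  times.\<close>
fun rep_block :: "nat \<Rightarrow> nat \<Rightarrow> nat \<Rightarrow> nat" where
  "rep_block K c 0 = 0"
| "rep_block K c (Suc j) = 2 ^ (2 * K) * rep_block K c j + c * (2 ^ K + 1)"

lemma rep_block_mult:
  assumes "int p * int c = int q * (2 ^ K - 1)"
  shows "int p * int (rep_block K c j) = int q * (2 ^ (2 * K * j) - 1)"
proof (induction j)
  case (Suc j)
  have "int p * int (rep_block K c (Suc j)) = 2 ^ (2 * K) * (int p * int (rep_block K c j)) + (int p * int c) * (2 ^ K + 1)"
    by (simp add: algebra_simps)
  also have "\<dots> = int q * (2 ^ (2 * K * Suc j) - 1)"
    unfolding Suc.IH assms by (simp add: algebra_simps power_add power_mult_distrib mult_2 flip: power_add)
  finally show ?case .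
qed simp

lemma odd_dvd_pow2_totient_minus_1:
  assumes "odd p"
  shows "p dvd 2 ^ (totient p * m) - 1"
proof -
  have "[2 ^ totient p = 1] (mod p)"
    using assms by (intro euler_theorem) simp
  then have "[(2 ^ totient p) ^ m = 1 ^ m] (mod p)"
    by (rule cong_pow)
  then have "[2 ^ (totient p * m) = 1] (mod p)"
    by (simp add: power_mult)
  then show ?thesis
    by (rule cong_to_1_nat)
qed

lemma binary_words_of_odd_multiples:
  fixes p q :: nat
  assumes "odd p" "0 < q" "q < p"
  obtains K c r where "1 \<le> K" "0 < c" "c + 1 < 2 ^ K"
    and "p * r = 2 ^ (2 * K * 4) - 1" and "q * r = rep_block K c 4"
proof -
  define K where "K = totient p"
  have "0 < p"
    using assms by simp
  then have K: "1 \<le> K"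
    by (simp add: K_def Suc_le_eq)
  have "p dvd 2 ^ K - 1"
    using odd_dvd_pow2_totient_minus_1[OF assms(1), of 1] by (simp add: K_def)
  then obtain c0 where c0: "2 ^ K - 1 = p * c0" ..
  define c where "c = q * c0"
  have two_le: "(2::nat) \<le> 2 ^ K"
    using power_increasing[OF K, of "2::nat"] by simp
  have pc0: "int p * int c0 = 2 ^ K - 1"
    unfolding of_nat_mult[symmetric] c0[symmetric] using two_le by (simp add: of_nat_diff)
  have "int p * int c = int q * (int p * int c0)"
    by (simp add: c_def ac_simps)
  then have pc: "int p * int c = int q * (2 ^ K - 1)"
    unfolding pc0 .
  have "0 < c0"
    using c0 two_le by (cases c0) auto
  then have c_pos: "0 < c"
    using assms(2) by (simp add: c_def)
  have "p * c < p * (2 ^ K - 1)"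
    using c0 \<open>0 < c0\<close> assms(3) by (simp add: c_def)
  then have "c < 2 ^ K - 1"
    by simp
  then have c_less: "c + 1 < 2 ^ K"
    by arith
  have "p dvd 2 ^ (2 * K * 4) - 1"
    using odd_dvd_pow2_totient_minus_1[OF assms(1), of 8] by (simp add: K_def ac_simps)
  then obtain r where r: "2 ^ (2 * K * 4) - 1 = p * r" ..
  have pr: "int p * int r = 2 ^ (2 * K * 4) - 1"
    unfolding of_nat_mult[symmetric] r[symmetric] by (simp add: of_nat_diff)
  have "int p * int (q * r) = int q * (int p * int r)"
    by (simp add: ac_simps)
  also have "\<dots> = int p * int (rep_block K c 4)"
    unfolding pr rep_block_mult[OF pc] ..
  finally have "int p * int (q * r) = int p * int (rep_block K c 4)" .
  then have "q * r = rep_block K c 4"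
    using \<open>0 < p\<close> by (simp only: mult_cancel_left of_nat_eq_iff of_nat_eq_0_iff) simp
  with K c_pos c_less r show thesis
    by (intro that) simp_all
qed

section \<open>The recursion of the Fourier coefficients\<close>

locale tm_coeffs =
  fixes g :: "nat \<Rightarrow> real"
  assumes g_0: "g 0 = 1"
    and g_double: "g (2 * k) = g k"
    and g_Suc_double: "g (2 * k + 1) = - (g k + g (k + 1)) / 2"
begin

lemma g_1: "g 1 = - 1 / 3"
  using g_Suc_double[of 0] g_0 by simp

lemma abs_g_le_1: "\<bar>g n\<bar> \<le> 1"
proof (induction n rule: less_induct)
  case (less n)
  define k where "k = n div 2"
  show ?case
  proof (cases "n \<le> 1")
    case True
    then have "n = 0 \<or> n = 1"
      by auto
    then show ?thesis
      by (elim disjE) (simp_all add: g_0 g_1[unfolded One_nat_def])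
  next
    case False
    show ?thesis
    proof (cases "even n")
      case True
      then have "n = 2 * k"
        by (simp add: k_def)
      then have "g n = g k" "k < n"
        using False g_double[of k] by simp_all
      then show ?thesis
        using less by simp
    next
      case odd: False
      then have "n = 2 * k + 1"
        by (simp add: k_def)
      moreover from this have "\<bar>g k\<bar> \<le> 1" "\<bar>g (k + 1)\<bar> \<le> 1"
        using False less by simp_all
      ultimately show ?thesis
        using abs_neg_half_sum_le by (simp only: g_Suc_double)
    qed
  qed
qed

lemma g_pow2_mult: "g (2 ^ m * n) = g n"
  by (induction m) (simp_all add: mult.assoc g_double)

text \<open>Even extension to the integers, as for the Fourier coefficients of \<open>\<sigma>\<close>.\<close>
definition g_int :: "int \<Rightarrow> real" where
  "g_int i = g (nat \<bar>i\<bar>)"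

lemma g_int_of_nat [simp]: "g_int (int n) = g n"
  by (simp add: g_int_def)

lemma g_int_minus [simp]: "g_int (- i) = g_int i"
  by (simp add: g_int_def)

lemma g_int_double: "g_int (2 * i) = g_int i"
  by (simp add: g_int_def abs_mult nat_mult_distrib g_double)

lemma g_int_Suc_double: "g_int (2 * i + 1) = - (g_int i + g_int (i + 1)) / 2"
proof (cases "i \<ge> 0")
  case True
  then have "nat \<bar>2 * i + 1\<bar> = 2 * nat i + 1" "nat \<bar>i + 1\<bar> = nat i + 1" "nat \<bar>i\<bar> = nat i"
    by auto
  then show ?thesis
    unfolding g_int_def by (simp only: g_Suc_double)
next
  case False
  then have "nat \<bar>2 * i + 1\<bar> = 2 * nat (- i - 1) + 1" "nat \<bar>i + 1\<bar> = nat (- i - 1)"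
      "nat \<bar>i\<bar> = nat (- i - 1) + 1"
    by auto
  then show ?thesis
    unfolding g_int_def by (simp only: g_Suc_double) (simp add: add.commute)
qed

lemma abs_g_int_le_1: "\<bar>g_int i\<bar> \<le> 1"
  by (simp add: g_int_def abs_g_le_1)

lemma g_int_pow2_mult: "g_int (2 ^ m * i) = g_int i"
  by (induction m) (simp_all add: mult.assoc g_int_double)

text \<open>Decays geometrically in \<open>m\<close>: the doubling map is mixing.\<close>
definition mixing_defect :: "int \<Rightarrow> nat \<Rightarrow> int \<Rightarrow> real" where
  "mixing_defect a m b = g_int (2 ^ m * a + b) - g_int a * g_int b"

lemma mixing_defect_double: "mixing_defect a (Suc m) (2 * b) = mixing_defect a m b"
proof -
  have "2 ^ Suc m * a + 2 * b = 2 * (2 ^ m * a + b)"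
    by simp
  then show ?thesis
    by (simp only: mixing_defect_def g_int_double)
qed

lemma mixing_defect_Suc_double:
  "mixing_defect a (Suc m) (2 * b + 1) = - (mixing_defect a m b + mixing_defect a m (b + 1)) / 2"
proof -
  have "2 ^ Suc m * a + (2 * b + 1) = 2 * (2 ^ m * a + b) + 1"
    by simp
  then have A: "g_int (2 ^ Suc m * a + (2 * b + 1))
      = - (g_int (2 ^ m * a + b) + g_int (2 ^ m * a + (b + 1))) / 2"
    by (simp only: g_int_Suc_double add.assoc)
  show ?thesis
    unfolding mixing_defect_def A g_int_Suc_double[of b] by (simp add: field_simps)
qed

lemma abs_mixing_defect_le_2: "\<bar>mixing_defect a m b\<bar> \<le> 2"
proof -
  have "\<bar>g_int a * g_int b\<bar> \<le> 1"
    using abs_g_int_le_1[of a] abs_g_int_le_1[of b] by (simp add: abs_mult mult_le_one)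
  then show ?thesis
    using abs_g_int_le_1[of "2 ^ m * a + b"] by (simp add: mixing_defect_def abs_le_iff)
qed

lemma mixing_defect_0: "mixing_defect a m 0 = 0"
  by (simp add: mixing_defect_def g_int_pow2_mult g_int_def[of 0] g_0)

lemma abs_mixing_defect_le_unit: "\<bar>b\<bar> \<le> 1 \<Longrightarrow> \<bar>mixing_defect a m b\<bar> \<le> 2 * (1 / 2) ^ m"
proof (induction m arbitrary: b)
  case 0
  then show ?case
    using abs_mixing_defect_le_2 by simp
next
  case (Suc m)
  have "b = 0 \<or> b = 1 \<or> b = - 1"
    using Suc.prems by auto
  then have "mixing_defect a (Suc m) b = - mixing_defect a m b / 2"
    using mixing_defect_Suc_double[of a m 0] mixing_defect_Suc_double[of a m "- 1"]
    by (auto simp: mixing_defect_0)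
  then show ?case
    using Suc.IH[OF Suc.prems] by (simp add: mult.commute)
qed

lemma abs_mixing_defect_decay: "\<bar>b\<bar> \<le> 2 ^ t \<Longrightarrow> \<bar>mixing_defect a (m + t) b\<bar> \<le> 2 * (1 / 2) ^ m"
proof (induction t arbitrary: b)
  case 0
  then show ?case
    using abs_mixing_defect_le_unit by simp
next
  case (Suc t)
  define c where "c = b div 2"
  have "b = 2 * c \<or> b = 2 * c + 1"
    unfolding c_def by presburger
  then show ?case
  proof
    assume b: "b = 2 * c"
    then have "\<bar>c\<bar> \<le> 2 ^ t"
      using Suc.prems by simp
    then have "\<bar>mixing_defect a (m + t) c\<bar> \<le> 2 * (1 / 2) ^ m"
      by (rule Suc.IH)
    then show ?thesis
      by (simp add: b mixing_defect_double)
  next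
    assume b: "b = 2 * c + 1"
    then have "\<bar>c\<bar> \<le> 2 ^ t" "\<bar>c + 1\<bar> \<le> 2 ^ t"
      using Suc.prems by auto
    then have "\<bar>mixing_defect a (m + t) c\<bar> \<le> 2 * (1 / 2) ^ m"
        "\<bar>mixing_defect a (m + t) (c + 1)\<bar> \<le> 2 * (1 / 2) ^ m"
      using Suc.IH by blast+
    moreover have "mixing_defect a (m + Suc t) b
        = - (mixing_defect a (m + t) c + mixing_defect a (m + t) (c + 1)) / 2"
      using mixing_defect_Suc_double[of a "m + t" c] by (simp add: b)
    ultimately show ?thesis
      by (simp add: abs_neg_half_sum_le)
  qed
qed

lemma abs_g_mult_pow2_minus_le: "\<bar>g (u * (2 ^ d - 1)) - (g u)\<^sup>2\<bar> \<le> 2 ^ (u + 1) * (1 / 2) ^ d"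
proof -
  have "2 ^ d * int u + - int u = int (u * (2 ^ d - 1))"
    by (simp add: of_nat_diff algebra_simps)
  then have eq: "mixing_defect (int u) d (- int u) = g (u * (2 ^ d - 1)) - (g u)\<^sup>2"
    by (simp only: mixing_defect_def g_int_minus g_int_of_nat power2_eq_square)
  show ?thesis
  proof (cases "u \<le> d")
    case True
    define e where "e = d - u"
    have e: "d = e + u"
      using True by (simp add: e_def)
    have "\<bar>- int u\<bar> \<le> 2 ^ u"
      using less_exp[of u] by simp
    then have "\<bar>mixing_defect (int u) (e + u) (- int u)\<bar> \<le> 2 * (1 / 2) ^ e"
      by (rule abs_mixing_defect_decay)
    also have "2 * (1 / 2) ^ e = (2::real) ^ (u + 1) * (1 / 2) ^ d"
      by (simp add: e power_add power_divide field_simps)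
    finally show ?thesis
      using e eq by simp
  next
    case False
    then have "(2::real) ^ (d + 1) \<le> 2 ^ (u + 1)"
      by (intro power_increasing) auto
    then have "(2::real) \<le> 2 ^ (u + 1) * (1 / 2) ^ d"
      by (simp add: power_divide field_simps)
    then show ?thesis
      using abs_mixing_defect_le_2[of "int u" d "- int u"] eq by linarith
  qed
qed

lemma abs_g_int_doubling_diff_le:
  "\<bar>g_int (int (u * 2 ^ j) - int (u * 2 ^ k)) - (g u)\<^sup>2\<bar> \<le> 2 ^ (u + 1) * (1 / 2) ^ nat \<bar>int j - int k\<bar>"
proof (induction j k rule: linorder_wlog)
  case (le j k)
  define d where "d = k - j"
  have d: "k = j + d"
    using le by (simp add: d_def)
  have "int (u * 2 ^ j) - int (u * 2 ^ k) = - (2 ^ j * int (u * (2 ^ d - 1)))"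
    by (simp add: d power_add of_nat_diff algebra_simps)
  moreover have "nat \<bar>int j - int k\<bar> = d"
    using d by simp
  ultimately show ?case
    using abs_g_mult_pow2_minus_le[of u d] by (simp only: g_int_minus g_int_pow2_mult g_int_of_nat)
next
  case (sym j k)
  have "g_int (int (u * 2 ^ j) - int (u * 2 ^ k)) = g_int (int (u * 2 ^ k) - int (u * 2 ^ j))"
    using g_int_minus[of "int (u * 2 ^ k) - int (u * 2 ^ j)"] by simp
  moreover have "nat \<bar>int j - int k\<bar> = nat \<bar>int k - int j\<bar>"
    by simp
  ultimately show ?case
    using sym by (simp only:)
qed

section \<open>Digit patterns that halve \<open>max \<bar>g n\<bar> \<bar>g (n + 1)\<bar>\<close>\<close>

definition pairmax :: "nat \<Rightarrow> real" where
  "pairmax n = max \<bar>g n\<bar> \<bar>g (n + 1)\<bar>"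

lemma pairmax_0: "pairmax 0 = 1"
  by (simp add: pairmax_def g_0 g_1[unfolded One_nat_def])

lemma abs_g_Suc_double_le: "\<bar>g (2 * n + 1)\<bar> \<le> pairmax n"
  unfolding g_Suc_double by (rule abs_neg_half_sum_le) (simp_all add: pairmax_def)

lemma pairmax_double_le: "pairmax (2 * n) \<le> pairmax n"
  using abs_g_Suc_double_le[of n] by (simp add: pairmax_def g_double)

lemma pairmax_Suc_double_le: "pairmax (2 * n + 1) \<le> pairmax n"
  using abs_g_Suc_double_le[of n] g_double[of "n + 1"] by (simp add: pairmax_def)

text \<open>Appending the \<open>j\<close> binary digits of \<open>x < 2 ^ j\<close> to \<open>n\<close> gives \<open>2 ^ j * n + x\<close>. The lemma
  names below spell the appended digits, most significant first.\<close>

lemma pairmax_append_le: "x < 2 ^ j \<Longrightarrow> pairmax (2 ^ j * n + x) \<le> pairmax n"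
proof (induction j arbitrary: x)
  case (Suc j)
  have eq: "2 ^ Suc j * n + x = 2 * (2 ^ j * n + x div 2) + x mod 2"
    by simp
  have "pairmax (2 * (2 ^ j * n + x div 2) + x mod 2) \<le> pairmax (2 ^ j * n + x div 2)"
    using pairmax_double_le[of "2 ^ j * n + x div 2"] pairmax_Suc_double_le[of "2 ^ j * n + x div 2"]
    by (cases "even x") (simp_all add: odd_iff_mod_2_eq_one)
  moreover have "pairmax (2 ^ j * n + x div 2) \<le> pairmax n"
    using Suc by simp
  ultimately show ?case
    unfolding eq by linarith
qed simp

lemma g_pow2_mult_plus_1: "g (2 ^ k * m + 1) = - g m / 3 + (- 1 / 2) ^ k * (g (m + 1) + g m / 3)"
proof (induction k)
  case (Suc k)
  have "g (2 ^ Suc k * m + 1) = - (g m + g (2 ^ k * m + 1)) / 2"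
    using g_Suc_double[of "2 ^ k * m"] by (simp add: g_pow2_mult mult.assoc)
  then show ?case
    using Suc.IH by (simp add: field_simps)
qed simp

lemma g_pow2_mult_minus_1: "g (2 ^ k * (m + 1) - 1) = - g (m + 1) / 3 + (- 1 / 2) ^ k * (g m + g (m + 1) / 3)"
proof (induction k)
  case (Suc k)
  define X where "X = 2 ^ k * (m + 1)"
  have "0 < X" "2 ^ Suc k * (m + 1) = 2 * X"
    by (simp_all add: X_def)
  then have e: "2 ^ Suc k * (m + 1) - 1 = 2 * (X - 1) + 1" "X - 1 + 1 = X"
    by simp_all
  have "g X = g (m + 1)"
    unfolding X_def by (rule g_pow2_mult)
  then have "g (2 ^ Suc k * (m + 1) - 1) = - (g (X - 1) + g (m + 1)) / 2"
    by (simp only: e g_Suc_double)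
  then show ?case
    using Suc.IH by (simp add: X_def field_simps)
qed simp

lemma pairmax_append_10k1:
  assumes "1 \<le> k"
  shows "pairmax (2 ^ (k + 2) * n + 2 ^ (k + 1) + 1) \<le> pairmax n / 2"
proof -
  define x y t where "x = g n" and "y = g (n + 1)" and "t = (- 1 / 2 :: real) ^ k"
  define m where "m = 2 * n + 1"
  define z where "z = g (2 ^ k * m + 1)"
  have xy: "\<bar>x\<bar> \<le> pairmax n" "\<bar>y\<bar> \<le> pairmax n"
    by (simp_all add: x_def y_def pairmax_def)
  have t: "- 1 / 2 \<le> t" "t \<le> 1 / 4"
    using neg_half_power_bounds[OF assms] by (simp_all add: t_def)
  have gm: "g m = - (x + y) / 2"
    unfolding m_def x_def y_def by (rule g_Suc_double)
  have gm1: "g (m + 1) = y"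
    using g_double[of "n + 1"] by (simp add: m_def y_def)
  have z: "z = (1 - t) / 6 * x + (1 + 5 * t) / 6 * y"
    unfolding z_def g_pow2_mult_plus_1 gm gm1 t_def by (simp add: field_simps)
  have e: "2 ^ (k + 2) * n + 2 ^ (k + 1) + 1 = 2 * (2 ^ k * m) + 1"
    by (simp add: m_def algebra_simps)
  have "\<bar>g (2 * (2 ^ k * m) + 1)\<bar> \<le> pairmax n / 2"
  proof -
    have "g (2 * (2 ^ k * m) + 1) = - (g m + z) / 2"
      by (simp only: g_Suc_double g_pow2_mult z_def)
    then show ?thesis
      using pattern_coefficient_bounds(2)[OF xy t] unfolding gm z by simp
  qed
  moreover have "\<bar>g (2 * (2 ^ k * m) + 1 + 1)\<bar> \<le> pairmax n / 2"
  proof -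
    have "g (2 * (2 ^ k * m) + 1 + 1) = z"
      unfolding z_def using g_double[of "2 ^ k * m + 1"] by simp
    then show ?thesis
      using pattern_coefficient_bounds(1)[OF xy t] unfolding z by simp
  qed
  ultimately show ?thesis
    unfolding e pairmax_def by (rule max.boundedI)
qed

lemma pairmax_append_01k0:
  assumes "1 \<le> k"
  shows "pairmax (2 ^ (k + 2) * n + 2 ^ (k + 1) - 2) \<le> pairmax n / 2"
proof -
  define x y t where "x = g n" and "y = g (n + 1)" and "t = (- 1 / 2 :: real) ^ k"
  define m where "m = 2 ^ k * (2 * n + 1) - 1"
  have xy: "\<bar>y\<bar> \<le> pairmax n" "\<bar>x\<bar> \<le> pairmax n"
    by (simp_all add: x_def y_def pairmax_def)
  have t: "- 1 / 2 \<le> t" "t \<le> 1 / 4"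
    using neg_half_power_bounds[OF assms] by (simp_all add: t_def)
  have g_odd: "g (2 * n + 1) = - (y + x) / 2"
    unfolding x_def y_def g_Suc_double by simp
  have gm: "g m = (1 - t) / 6 * y + (1 + 5 * t) / 6 * x"
    using g_pow2_mult_minus_1[of k "2 * n"] unfolding m_def g_double g_odd t_def x_def
    by (simp add: field_simps)
  have pos: "0 < 2 ^ k * (2 * n + 1)"
    by simp
  have e: "2 ^ (k + 2) * n + 2 ^ (k + 1) - 2 = 2 * m"
    using pos by (simp add: m_def algebra_simps)
  have "\<bar>g (2 * m)\<bar> \<le> pairmax n / 2"
    using pattern_coefficient_bounds(1)[OF xy t] unfolding g_double gm .
  moreover have "\<bar>g (2 * m + 1)\<bar> \<le> pairmax n / 2"
  proof -
    have m1: "m + 1 = 2 ^ k * (2 * n + 1)"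
      using pos by (simp add: m_def)
    have "g (2 * m + 1) = - (g m + g (2 * n + 1)) / 2"
      by (simp only: g_Suc_double m1 g_pow2_mult)
    then show ?thesis
      using pattern_coefficient_bounds(2)[OF xy t] unfolding g_odd gm by (simp add: add.commute)
  qed
  ultimately show ?thesis
    unfolding e pairmax_def by (rule max.boundedI)
qed

lemma pairmax_append_1w0k1:
  "w < 2 ^ L \<Longrightarrow> 1 \<le> k \<or> w + 1 < 2 ^ L \<Longrightarrow>
   pairmax (2 ^ (L + k + 2) * n + 2 ^ (L + k + 1) + 2 ^ (k + 1) * w + 1) \<le> pairmax n / 2"
proof (induction L arbitrary: k w n)
  case 0
  then show ?case
    using pairmax_append_10k1[of k n] by simp
next
  case (Suc L)
  define w' where "w' = w div 2"
  have w': "w' < 2 ^ L"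
    using Suc.prems(1) by (simp add: w'_def)
  show ?case
  proof (cases "even w")
    case True
    then have "2 ^ (Suc L + k + 2) * n + 2 ^ (Suc L + k + 1) + 2 ^ (k + 1) * w + 1
        = 2 ^ (L + (k + 1) + 2) * n + 2 ^ (L + (k + 1) + 1) + 2 ^ (k + 1 + 1) * w' + 1"
      by (simp add: w'_def power_add algebra_simps)
    then show ?thesis
      using Suc.IH[of w' "k + 1" n] w' by (simp only:) simp
  next
    case odd: False
    then have w: "w = 2 * w' + 1"
      by (simp add: w'_def)
    show ?thesis
    proof (cases "1 \<le> k")
      case True
      have "2 ^ (Suc L + k + 2) * n + 2 ^ (Suc L + k + 1) + 2 ^ (k + 1) * w + 1
          = 2 ^ (k + 2) * (2 ^ Suc L * n + (2 ^ L + w')) + 2 ^ (k + 1) + 1"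
        by (simp add: w power_add algebra_simps)
      moreover have "pairmax (2 ^ Suc L * n + (2 ^ L + w')) \<le> pairmax n"
        using w' by (intro pairmax_append_le) simp
      ultimately show ?thesis
        using pairmax_append_10k1[OF True, of "2 ^ Suc L * n + (2 ^ L + w')"] by simp
    next
      case False
      then have k: "k = 0" and "w' + 1 < 2 ^ L"
        using Suc.prems(2) w by auto
      define n' where "n' = 2 ^ (L + 2) * n + 2 ^ (L + 1) + 2 * w' + 1"
      have "2 ^ (Suc L + k + 2) * n + 2 ^ (Suc L + k + 1) + 2 ^ (k + 1) * w + 1 = 2 * n' + 1"
        by (simp add: k w n'_def power_add algebra_simps)
      moreover have "pairmax n' \<le> pairmax n / 2"
        using Suc.IH[of w' 0 n] w' \<open>w' + 1 < 2 ^ L\<close> by (simp add: n'_def)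
      ultimately show ?thesis
        using pairmax_Suc_double_le[of n'] by simp
    qed
  qed
qed

lemma pairmax_append_0w1k0:
  "w < 2 ^ L \<Longrightarrow> 1 \<le> k \<or> 0 < w \<Longrightarrow>
   pairmax (2 ^ (L + k + 2) * n + 2 ^ (k + 1) * w + 2 ^ (k + 1) - 2) \<le> pairmax n / 2"
proof (induction L arbitrary: k w n)
  case 0
  then show ?case
    using pairmax_append_01k0[of k n] by simp
next
  case (Suc L)
  define w' where "w' = w div 2"
  have w': "w' < 2 ^ L"
    using Suc.prems(1) by (simp add: w'_def)
  have two_le: "(2::nat) \<le> 2 ^ (k + 1)"
    by simp
  show ?case
  proof (cases "even w")
    case False
    then have "w = 2 * w' + 1"
      by (simp add: w'_def)
    then have "2 ^ (Suc L + k + 2) * n + 2 ^ (k + 1) * w + 2 ^ (k + 1) - 2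
        = 2 ^ (L + (k + 1) + 2) * n + 2 ^ (k + 1 + 1) * w' + 2 ^ (k + 1 + 1) - 2"
      by (simp add: power_add algebra_simps)
    then show ?thesis
      using Suc.IH[of w' "k + 1" n] w' by (simp only:) simp
  next
    case even: True
    then have w: "w = 2 * w'"
      by (simp add: w'_def)
    show ?thesis
    proof (cases "1 \<le> k")
      case True
      have "2 ^ (Suc L + k + 2) * n + 2 ^ (k + 1) * w + 2 ^ (k + 1) - 2
          = 2 ^ (k + 2) * (2 ^ Suc L * n + w') + 2 ^ (k + 1) - 2"
        using two_le by (simp add: w power_add algebra_simps)
      moreover have "pairmax (2 ^ Suc L * n + w') \<le> pairmax n"
        using w' by (intro pairmax_append_le) simp
      ultimately show ?thesis
        using pairmax_append_01k0[OF True, of "2 ^ Suc L * n + w'"] by simp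
    next
      case False
      then have k: "k = 0" and "0 < w'"
        using Suc.prems(2) w by auto
      define n' where "n' = 2 ^ (L + 2) * n + 2 * w'"
      have "2 ^ (Suc L + k + 2) * n + 2 ^ (k + 1) * w + 2 ^ (k + 1) - 2 = 2 * n'"
        by (simp add: k w n'_def power_add algebra_simps)
      moreover have "pairmax n' \<le> pairmax n / 2"
        using Suc.IH[of w' 0 n] w' \<open>0 < w'\<close> by (simp add: n'_def)
      ultimately show ?thesis
        using pairmax_double_le[of n'] by simp
    qed
  qed
qed

text \<open>Appending twice the \<open>K\<close> digits of \<open>c\<close> creates one of the two patterns above, unless
  the digits of \<open>c\<close> are all equal.\<close>
lemma pairmax_append_square:
  assumes "1 \<le> K" "0 < c" "c + 1 < 2 ^ K"
  shows "pairmax (2 ^ (2 * K) * n + c * (2 ^ K + 1)) \<le> pairmax n / 2"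
proof -
  obtain L where L: "K = L + 1"
    using assms(1) by (auto dest: le_Suc_ex)
  define w where "w = c div 2"
  define n' where "n' = 2 ^ L * n + w"
  have w: "w < 2 ^ L"
    using assms(3) by (simp add: w_def L)
  have "pairmax n' \<le> pairmax n"
    unfolding n'_def using w by (rule pairmax_append_le)
  moreover have sq: "(2::nat) ^ (2 * K) = 2 ^ K * 2 ^ K"
    by (simp add: power_add mult_2)
  show ?thesis
  proof (cases "even c")
    case False
    then have c: "c = 2 * w + 1"
      by (simp add: w_def)
    have "2 ^ (2 * K) * n + c * (2 ^ K + 1) = 2 ^ (L + 0 + 2) * n' + 2 ^ (L + 0 + 1) + 2 ^ (0 + 1) * w + 1"
      unfolding sq by (simp add: c L n'_def power_add algebra_simps)
    moreover have "w + 1 < 2 ^ L"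
      using assms(3) by (simp add: c L)
    ultimately show ?thesis
      using pairmax_append_1w0k1[of w L 0 n'] w \<open>pairmax n' \<le> pairmax n\<close> by simp
  next
    case True
    then have c: "c = 2 * w"
      by (simp add: w_def)
    have "2 ^ (2 * K) * n + c * (2 ^ K + 1) = 2 ^ (L + 0 + 2) * n' + 2 ^ (0 + 1) * w + 2 ^ (0 + 1) - 2"
      unfolding sq by (simp add: c L n'_def power_add algebra_simps)
    moreover have "0 < w"
      using assms(2) by (simp add: c)
    ultimately show ?thesis
      using pairmax_append_0w1k0[of w L 0 n'] w \<open>pairmax n' \<le> pairmax n\<close> by simp
  qed
qed

lemma g_pow2_minus_1: "g (2 ^ L - 1) = 1 / 9 + 8 / 9 * (- 1 / 2) ^ L"
proof (induction L)
  case (Suc L)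
  define X :: nat where "X = 2 ^ L"
  have "0 < X" "2 ^ Suc L = 2 * X"
    by (simp_all add: X_def)
  then have e: "2 ^ Suc L - 1 = 2 * (X - 1) + 1" "X - 1 + 1 = X"
    by simp_all
  have "g X = - 1 / 3"
    using g_pow2_mult[of L 1] g_1 by (simp add: X_def)
  then have "g (2 ^ Suc L - 1) = - (g (X - 1) - 1 / 3) / 2"
    by (simp only: e g_Suc_double) simp
  then show ?case
    using Suc.IH by (simp add: X_def field_simps)
qed (simp add: g_0)

lemma pairmax_rep_block_le:
  assumes "1 \<le> K" "0 < c" "c + 1 < 2 ^ K"
  shows "pairmax (rep_block K c j) \<le> (1 / 2) ^ j"
proof (induction j)
  case (Suc j)
  then show ?case
    using pairmax_append_square[OF assms, of "rep_block K c j"] by simp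
qed (simp add: pairmax_0)

lemma exists_g_mult_neq_if_less:
  assumes "odd p" "odd q" "q < p"
  shows "\<exists>r. g (p * r) \<noteq> g (q * r)"
proof -
  obtain K c r where K: "1 \<le> K" "0 < c" "c + 1 < 2 ^ K"
    and pr: "p * r = 2 ^ (2 * K * 4) - 1" and qr: "q * r = rep_block K c 4"
    using binary_words_of_odd_multiples[of p q] assms by (auto intro: odd_pos)
  have "g (p * r) > 1 / 9"
    using g_pow2_minus_1[of "2 * K * 4"] by (simp add: pr zero_less_power_eq)
  moreover have "\<bar>g (q * r)\<bar> \<le> 1 / 16"
    using pairmax_rep_block_le[OF K, of 4] by (simp add: qr pairmax_def power_divide)
  ultimately have "g (p * r) \<noteq> g (q * r)"
    by (auto simp: abs_le_iff)
  then show ?thesis ..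
qed

lemma exists_g_mult_neq:
  assumes "odd p" "odd q" "p \<noteq> q"
  shows "\<exists>r. g (p * r) \<noteq> g (q * r)"
proof (cases "q < p")
  case True
  then show ?thesis
    using assms by (intro exists_g_mult_neq_if_less)
next
  case False
  then have "p < q"
    using assms(3) by simp
  then obtain r where "g (q * r) \<noteq> g (p * r)"
    using assms exists_g_mult_neq_if_less[of q p] by blast
  then show ?thesis
    by (intro exI[of _ r]) (simp add: eq_commute)
qed

end

section \<open>Mutual singularity from almost sure limits\<close>

lemma mutually_singular_if_AE_tendsto:
  fixes f :: "nat \<Rightarrow> 'a \<Rightarrow> 'b::{first_countable_topology, t2_space}"
  assumes sets: "sets \<mu> = sets M" "sets \<nu> = sets M"
    and meas: "\<And>j. f j \<in> borel_measurable M"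
    and lim_\<mu>: "AE x in \<mu>. (\<lambda>j. f j x) \<longlonglongrightarrow> a"
    and lim_\<nu>: "AE x in \<nu>. (\<lambda>j. f j x) \<longlonglongrightarrow> b"
    and "a \<noteq> b"
  shows "mutually_singular \<mu> \<nu>"
proof -
  define A where "A = {x \<in> space M. (\<lambda>j. f j x) \<longlonglongrightarrow> b}"
  have A: "A \<in> sets M"
    unfolding A_def by (rule predE[OF measurable_limit[OF meas]])
  have space: "space \<mu> = space M" "space \<nu> = space M"
    by (intro sets_eq_imp_space_eq sets)+
  have "AE x in \<mu>. x \<notin> A"
    using lim_\<mu>
  proof eventually_elim
    case (elim x)
    show "x \<notin> A"
    proof
      assume "x \<in> A"
      then have "(\<lambda>j. f j x) \<longlonglongrightarrow> b"
        by (simp add: A_def)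
      with elim have "a = b"
        by (rule LIMSEQ_unique)
      with \<open>a \<noteq> b\<close> show False ..
    qed
  qed
  then have "\<mu> A = 0"
    using AE_iff_null_sets[of A \<mu>] A sets by (simp add: null_setsD1)
  moreover have "AE x in \<nu>. x \<notin> space \<nu> - A"
    using lim_\<nu> AE_space[of \<nu>] by eventually_elim (auto simp: A_def space)
  then have "\<nu> (space \<nu> - A) = 0"
    using AE_iff_null_sets[of "space \<nu> - A" \<nu>] sets.compl_sets[OF A] sets
    by (simp add: space null_setsD1)
  ultimately show ?thesis
    using A sets unfolding mutually_singular_def by auto
qed

lemma (in prob_space) AE_tendsto_if_summable_prob_dist:
  fixes X :: "nat \<Rightarrow> 'a \<Rightarrow> 'b::{metric_space, second_countable_topology}"
  assumes [measurable]: "\<And>j. X j \<in> borel_measurable M"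
    and summable: "\<And>e. 0 < e \<Longrightarrow> summable (\<lambda>j. prob {x \<in> space M. e \<le> dist (X j x) c})"
  shows "AE x in M. (\<lambda>j. X j x) \<longlonglongrightarrow> c"
proof -
  have "AE x in M. eventually (\<lambda>j. dist (X j x) c < inverse (Suc i)) sequentially" for i :: nat
  proof -
    have "AE x in M. eventually (\<lambda>j. x \<in> space M - {x \<in> space M. inverse (Suc i) \<le> dist (X j x) c})
        sequentially"
    proof (rule borel_cantelli_AE1)
      show "{x \<in> space M. inverse (Suc i) \<le> dist (X j x) c} \<in> events" for j
        by measurable
    qed (use summable[of "inverse (Suc i)"] in \<open>simp_all add: less_top[symmetric]\<close>)
    then show ?thesis
      by eventually_elim (auto simp: not_le elim: eventually_mono)
  qed
  then have "AE x in M. \<forall>i::nat. eventually (\<lambda>j. dist (X j x) c < inverse (Suc i)) sequentially"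
    by (simp add: AE_all_countable)
  then show ?thesis
  proof eventually_elim
    case (elim x)
    show ?case
    proof (rule metric_LIMSEQ_I)
      fix e :: real
      assume "0 < e"
      then obtain i where i: "inverse (real (Suc i)) < e"
        using reals_Archimedean by blast
      obtain J where "\<forall>j\<ge>J. dist (X j x) c < inverse (Suc i)"
        using elim unfolding eventually_sequentially by blast
      with i show "\<exists>J. \<forall>j\<ge>J. dist (X j x) c < e"
        by (meson order.strict_trans)
    qed
  qed
qed

section \<open>Averages along doubling sequences\<close>

definition doubling_avg :: "nat \<Rightarrow> nat \<Rightarrow> complex \<Rightarrow> complex" where
  "doubling_avg u N z = (\<Sum>k<N. z ^ (u * 2 ^ k)) / of_nat N"

lemma borel_measurable_doubling_avg [measurable]: "doubling_avg u N \<in> borel_measurable borel"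
  unfolding doubling_avg_def by measurable

lemma doubling_avg_power: "doubling_avg u N (z ^ p) = doubling_avg (p * u) N z"
  by (simp add: doubling_avg_def mult.assoc flip: power_mult)

lemma norm_doubling_avg_le:
  assumes "cmod z = 1"
  shows "cmod (doubling_avg u N z) \<le> 1"
proof (cases "N = 0")
  case False
  have "cmod (\<Sum>k<N. z ^ (u * 2 ^ k)) \<le> (\<Sum>k<N. cmod (z ^ (u * 2 ^ k)))"
    by (rule norm_sum)
  also have "\<dots> = N"
    using assms by (simp add: norm_power)
  finally show ?thesis
    using False by (simp add: doubling_avg_def norm_divide divide_le_eq)
qed (simp add: doubling_avg_def)

lemma of_real_norm_avg_diff_sq:
  fixes x :: "nat \<Rightarrow> complex" and a :: real
  assumes "0 < N"
  shows "complex_of_real ((cmod ((\<Sum>k<N. x k) / of_nat N - of_real a))\<^sup>2)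
    = (\<Sum>j<N. \<Sum>k<N. (x j - of_real a) * (cnj (x k) - of_real a)) / (of_nat N)\<^sup>2"
proof -
  let ?X = "\<Sum>k<N. (x k - of_real a)"
  have "(\<Sum>k<N. x k) / of_nat N - of_real a = ?X / of_nat N"
    using assms by (simp add: sum_subtractf field_simps)
  moreover have "complex_of_real ((cmod (?X / of_nat N))\<^sup>2) = (?X / of_nat N) * cnj (?X / of_nat N)"
    by (rule complex_norm_square)
  moreover have "?X * cnj ?X = (\<Sum>j<N. \<Sum>k<N. (x j - of_real a) * (cnj (x k) - of_real a))"
    by (simp add: sum_product)
  ultimately show ?thesis
    by (simp add: power2_eq_square)
qed

locale tm_spectral = tm_coeffs g + prob_space \<sigma>
  for g :: "nat \<Rightarrow> real" and \<sigma> :: "complex measure" +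
  assumes sets_\<sigma>: "sets \<sigma> = sets borel"
    and AE_norm_eq_1: "AE z in \<sigma>. cmod z = 1"
    and integral_power: "(\<integral>z. z ^ k \<partial>\<sigma>) = of_real (g k)"
    and integral_cnj_power: "(\<integral>z. cnj z ^ k \<partial>\<sigma>) = of_real (g k)"
begin

lemma borel_measurable_\<sigma>: "f \<in> borel_measurable borel \<Longrightarrow> f \<in> borel_measurable \<sigma>"
  by (subst measurable_cong_sets[OF sets_\<sigma> refl])

lemma integrable_if_bounded_on_circle:
  fixes f :: "complex \<Rightarrow> 'b::{banach, second_countable_topology}"
  assumes "continuous_on UNIV f" "\<And>z. cmod z = 1 \<Longrightarrow> norm (f z) \<le> B"
  shows "integrable \<sigma> f"
proof (rule integrable_const_bound)
  show "AE z in \<sigma>. norm (f z) \<le> B"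
    using AE_norm_eq_1 by eventually_elim (use assms(2) in auto)
  show "f \<in> borel_measurable \<sigma>"
    using assms(1) by (intro borel_measurable_\<sigma> borel_measurable_continuous_onI)
qed

lemma integrable_power_mult_cnj_power: "integrable \<sigma> (\<lambda>z. z ^ m * cnj z ^ n)"
  and integrable_power: "integrable \<sigma> (\<lambda>z. z ^ m)"
  and integrable_cnj_power: "integrable \<sigma> (\<lambda>z. cnj z ^ n)"
  by (rule integrable_if_bounded_on_circle[where B = 1];
      auto intro!: continuous_intros simp: norm_mult norm_power)+

lemma integral_power_mult_cnj_power: "(\<integral>z. z ^ m * cnj z ^ n \<partial>\<sigma>) = of_real (g_int (int m - int n))"
proof -
  have eq: "z ^ m * cnj z ^ n = (if n \<le> m then z ^ (m - n) else cnj z ^ (n - m))" if "cmod z = 1" for z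
  proof -
    have z: "z * cnj z = 1"
      using complex_norm_square[of z] that by simp
    show ?thesis
    proof (cases "n \<le> m")
      case True
      then have "z ^ m * cnj z ^ n = z ^ (m - n) * (z * cnj z) ^ n"
        by (simp add: power_mult_distrib mult_ac flip: power_add)
      then show ?thesis
        using True z by simp
    next
      case False
      then have "z ^ m * cnj z ^ n = cnj z ^ (n - m) * (z * cnj z) ^ m"
        by (simp add: power_mult_distrib mult_ac flip: power_add)
      then show ?thesis
        using False z by simp
    qed
  qed
  have "(\<integral>z. z ^ m * cnj z ^ n \<partial>\<sigma>) = (\<integral>z. (if n \<le> m then z ^ (m - n) else cnj z ^ (n - m)) \<partial>\<sigma>)"
  proof (rule integral_cong_AE)
    show "(\<lambda>z. z ^ m * cnj z ^ n) \<in> borel_measurable \<sigma>"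
      by (intro borel_measurable_\<sigma> borel_measurable_continuous_onI continuous_intros)
    show "(\<lambda>z. if n \<le> m then z ^ (m - n) else cnj z ^ (n - m)) \<in> borel_measurable \<sigma>"
      by (cases "n \<le> m")
        (simp_all add: borel_measurable_\<sigma> borel_measurable_continuous_onI continuous_intros)
    show "AE z in \<sigma>. z ^ m * cnj z ^ n = (if n \<le> m then z ^ (m - n) else cnj z ^ (n - m))"
      using AE_norm_eq_1 by eventually_elim (rule eq)
  qed
  also have "\<dots> = of_real (g_int (int m - int n))"
    by (cases "n \<le> m")
      (simp_all add: integral_power integral_cnj_power g_int_def flip: of_nat_diff)
  finally show ?thesis .
qed

lemma integrable_centered_product:
  "integrable \<sigma> (\<lambda>z. (z ^ m - of_real a) * (cnj z ^ n - of_real a))"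
  using integrable_power_mult_cnj_power[of m n] integrable_power[of m] integrable_cnj_power[of n]
  by (simp add: algebra_simps)

lemma integral_centered_product:
  "(\<integral>z. (z ^ m - of_real a) * (cnj z ^ n - of_real a) \<partial>\<sigma>)
    = of_real (g_int (int m - int n) - a * g m - a * g n + a\<^sup>2)"
proof -
  have "(\<lambda>z. (z ^ m - of_real a) * (cnj z ^ n - of_real a))
      = (\<lambda>z. z ^ m * cnj z ^ n - of_real a * z ^ m - of_real a * cnj z ^ n + of_real (a\<^sup>2))"
    by (auto simp: algebra_simps power2_eq_square)
  then show ?thesis
    using integrable_power_mult_cnj_power[of m n] integrable_power[of m] integrable_cnj_power[of n]
    by (simp add: integral_power_mult_cnj_power integral_power integral_cnj_power prob_space)
qed

lemma integral_norm_doubling_avg_diff_sq: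
  assumes "0 < N"
  shows "(\<integral>z. (cmod (doubling_avg u N z - of_real (g u)))\<^sup>2 \<partial>\<sigma>)
    = (\<Sum>j<N. \<Sum>k<N. g_int (int (u * 2 ^ j) - int (u * 2 ^ k)) - (g u)\<^sup>2) / (real N)\<^sup>2"
proof -
  let ?h = "\<lambda>j k z. (z ^ (u * 2 ^ j) - of_real (g u)) * (cnj z ^ (u * 2 ^ k) - of_real (g u))"
  have g_mult: "g (u * 2 ^ j) = g u" for j
    by (metis g_pow2_mult mult.commute)
  have "complex_of_real (\<integral>z. (cmod (doubling_avg u N z - of_real (g u)))\<^sup>2 \<partial>\<sigma>)
      = (\<integral>z. complex_of_real ((cmod (doubling_avg u N z - of_real (g u)))\<^sup>2) \<partial>\<sigma>)"
    by (rule integral_complex_of_real[symmetric])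
  also have "\<dots> = (\<integral>z. (\<Sum>j<N. \<Sum>k<N. ?h j k z) / (of_nat N)\<^sup>2 \<partial>\<sigma>)"
    unfolding doubling_avg_def by (simp only: of_real_norm_avg_diff_sq[OF assms] complex_cnj_power)
  also have "\<dots> = (\<Sum>j<N. \<Sum>k<N. \<integral>z. ?h j k z \<partial>\<sigma>) / (of_nat N)\<^sup>2"
    by (simp add: integrable_centered_product integrable_sum)
  also have "\<dots> = of_real ((\<Sum>j<N. \<Sum>k<N. g_int (int (u * 2 ^ j) - int (u * 2 ^ k)) - (g u)\<^sup>2) / (real N)\<^sup>2)"
    by (simp add: integral_centered_product g_mult power2_eq_square)
  finally show ?thesis
    by (simp only: of_real_eq_iff)
qed

lemma integral_norm_doubling_avg_diff_sq_le:
  assumes "0 < N"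
  shows "(\<integral>z. (cmod (doubling_avg u N z - of_real (g u)))\<^sup>2 \<partial>\<sigma>) \<le> 3 * 2 ^ (u + 1) / N"
proof -
  have "(\<Sum>j<N. \<Sum>k<N. g_int (int (u * 2 ^ j) - int (u * 2 ^ k)) - (g u)\<^sup>2)
      \<le> (\<Sum>j<N. \<Sum>k<N. 2 ^ (u + 1) * (1 / 2) ^ nat \<bar>int j - int k\<bar>)"
    using abs_g_int_doubling_diff_le by (intro sum_mono) (simp add: abs_le_iff)
  also have "\<dots> = 2 ^ (u + 1) * (\<Sum>j<N. \<Sum>k<N. (1 / 2) ^ nat \<bar>int j - int k\<bar>)"
    by (simp add: sum_distrib_left)
  also have "\<dots> \<le> 2 ^ (u + 1) * (3 * real N)"
    using sum_sum_pow_half_absdiff_le[of N] by (intro mult_left_mono) auto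
  finally have "(\<Sum>j<N. \<Sum>k<N. g_int (int (u * 2 ^ j) - int (u * 2 ^ k)) - (g u)\<^sup>2) / (real N)\<^sup>2
      \<le> 2 ^ (u + 1) * (3 * real N) / (real N)\<^sup>2"
    by (intro divide_right_mono) auto
  also have "\<dots> = 3 * 2 ^ (u + 1) / N"
    using assms by (simp add: power2_eq_square field_simps)
  finally show ?thesis
    using integral_norm_doubling_avg_diff_sq[OF assms] by simp
qed

lemma integrable_norm_doubling_avg_diff_sq:
  assumes "0 < N"
  shows "integrable \<sigma> (\<lambda>z. (cmod (doubling_avg u N z - of_real a))\<^sup>2)"
proof (rule integrable_if_bounded_on_circle[where B = "(1 + \<bar>a\<bar>)\<^sup>2"])
  show "continuous_on UNIV (\<lambda>z. (cmod (doubling_avg u N z - of_real a))\<^sup>2)"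
    using assms unfolding doubling_avg_def by (auto intro!: continuous_intros)
  fix z :: complex
  assume "cmod z = 1"
  then have "cmod (doubling_avg u N z - of_real a) \<le> 1 + \<bar>a\<bar>"
    using norm_doubling_avg_le[of z u N] norm_triangle_ineq4[of "doubling_avg u N z" "of_real a"]
    by simp
  then show "norm ((cmod (doubling_avg u N z - of_real a))\<^sup>2) \<le> (1 + \<bar>a\<bar>)\<^sup>2"
    by (simp add: power_mono)
qed

lemma measure_doubling_avg_deviation_le:
  assumes "0 < N" "0 < d"
  shows "measure (power_image \<sigma> p) {w. d \<le> dist (doubling_avg r N w) (of_real (g (p * r)))}
    \<le> 3 * 2 ^ (p * r + 1) / (d\<^sup>2 * N)"
proof -
  define F where "F z = cmod (doubling_avg (p * r) N z - of_real (g (p * r)))" for z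
  have [measurable]: "F \<in> borel_measurable \<sigma>"
    unfolding F_def by (intro borel_measurable_\<sigma>) measurable
  have "integrable \<sigma> (\<lambda>z. (F z)\<^sup>2)"
    unfolding F_def by (rule integrable_norm_doubling_avg_diff_sq[OF assms(1)])
  have "measure (power_image \<sigma> p) {w. d \<le> dist (doubling_avg r N w) (of_real (g (p * r)))}
      = measure \<sigma> {z \<in> space \<sigma>. \<bar>F z\<bar> \<ge> d}"
    unfolding power_image_def
    by (subst measure_distr) (auto intro!: borel_measurable_\<sigma> arg_cong[where f = "measure \<sigma>"]
        simp: F_def dist_norm doubling_avg_power)
  also have "\<dots> \<le> (\<integral>z. (F z)\<^sup>2 \<partial>\<sigma>) / d\<^sup>2"
    using \<open>integrable \<sigma> (\<lambda>z. (F z)\<^sup>2)\<close> assms(2) by (intro second_moment_method) auto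
  also have "\<dots> \<le> (3 * 2 ^ (p * r + 1) / N) / d\<^sup>2"
    unfolding F_def using integral_norm_doubling_avg_diff_sq_le[OF assms(1)]
    by (intro divide_right_mono) auto
  finally show ?thesis
    by (simp add: field_simps)
qed

text \<open>A strong law of large numbers along \<open>N = 2 ^ j\<close>: there the variance bound of order
  \<open>1 / N\<close> is summable, so Borel--Cantelli applies.\<close>
lemma AE_doubling_avg_tendsto:
  "AE w in power_image \<sigma> p. (\<lambda>j. doubling_avg r (2 ^ j) w) \<longlonglongrightarrow> of_real (g (p * r))"
proof -
  interpret \<mu>: prob_space "power_image \<sigma> p"
    unfolding power_image_def by (intro prob_space_distr borel_measurable_\<sigma>) measurable
  show ?thesis
  proof (rule \<mu>.AE_tendsto_if_summable_prob_dist)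
    fix e :: real
    assume "0 < e"
    define C :: real where "C = 3 * 2 ^ (p * r + 1) / e\<^sup>2"
    have bound: "\<mu>.prob {w \<in> space (power_image \<sigma> p).
        e \<le> dist (doubling_avg r (2 ^ j) w) (of_real (g (p * r)))} \<le> C * (1 / 2) ^ j" for j
      using measure_doubling_avg_deviation_le[of "2 ^ j" e p r] \<open>0 < e\<close>
      by (simp add: C_def power_image_def power_one_over)
    have "summable (\<lambda>j. C * (1 / 2 :: real) ^ j)"
      by (intro summable_mult summable_geometric) simp
    then show "summable (\<lambda>j. \<mu>.prob {w \<in> space (power_image \<sigma> p).
        e \<le> dist (doubling_avg r (2 ^ j) w) (of_real (g (p * r)))})"
      by (rule summable_comparison_test') (simp add: bound)
  qed (simp add: power_image_def measurable_cong_sets[OF sets_distr refl])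
qed

lemma mutually_singular_power_image:
  assumes "odd p" "odd q" "p \<noteq> q"
  shows "mutually_singular (power_image \<sigma> p) (power_image \<sigma> q)"
proof -
  obtain r where "g (p * r) \<noteq> g (q * r)"
    using exists_g_mult_neq[OF assms] by blast
  then show ?thesis
    by (intro mutually_singular_if_AE_tendsto[where M = borel and f = "\<lambda>j. doubling_avg r (2 ^ j)"
          and a = "of_real (g (p * r))" and b = "of_real (g (q * r))"] AE_doubling_avg_tendsto)
      (simp_all add: power_image_def)
qed

end

section \<open>The spectral measure of the Thue--Morse sequence\<close>

lemma tm_coeffs_if_tm_corr_tendsto:
  assumes lim: "\<And>k. (\<lambda>N. tm_corr k N / real N) \<longlonglongrightarrow> \<gamma> k"
  shows "tm_coeffs \<gamma>"
proof
  have "(\<lambda>N. tm_corr 0 N / real N) \<longlonglongrightarrow> 1"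
    by (rule tendsto_eventually) (auto simp: tm_corr_0 eventually_sequentially intro: exI[of _ 1])
  then show "\<gamma> 0 = 1"
    using lim LIMSEQ_unique by blast
  have mono: "strict_mono (\<lambda>N::nat. 2 * N)"
    by (auto simp: strict_mono_def)
  have lim2: "(\<lambda>N. tm_corr k (2 * N) / real (2 * N)) \<longlonglongrightarrow> \<gamma> k" for k
    using LIMSEQ_subseq_LIMSEQ[OF lim mono] by (simp only: comp_def)
  fix k
  have "(\<lambda>N. tm_corr (2 * k) (2 * N) / real (2 * N)) = (\<lambda>N. tm_corr k N / real N)"
    by (simp add: tm_corr_double)
  then show "\<gamma> (2 * k) = \<gamma> k"
    using LIMSEQ_unique[OF lim2[of "2 * k"]] lim[of k] by simp
  have "(\<lambda>N. tm_corr (2 * k + 1) (2 * N) / real (2 * N)) = (\<lambda>N. - (tm_corr k N / real N + tm_corr (k + 1) N / real N) / 2)"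
    unfolding tm_corr_Suc_double by (simp add: add_divide_distrib[symmetric] minus_divide_left mult.commute)
  moreover have "(\<lambda>N. - (tm_corr k N / real N + tm_corr (k + 1) N / real N) / 2) \<longlonglongrightarrow> - (\<gamma> k + \<gamma> (k + 1)) / 2"
    by (intro tendsto_intros lim) simp
  ultimately show "\<gamma> (2 * k + 1) = - (\<gamma> k + \<gamma> (k + 1)) / 2"
    using LIMSEQ_unique[OF lim2[of "2 * k + 1"]] by simp
qed

lemma tm_spectral_if_TM_spectral_measure:
  assumes "TM_spectral_measure \<sigma>"
  shows "tm_spectral (\<lambda>k. Re (\<integral>z. cnj z ^ k \<partial>\<sigma>)) \<sigma>"
proof -
  let ?\<gamma> = "\<lambda>k. Re (\<integral>z. cnj z ^ k \<partial>\<sigma>)"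
  have sets: "sets \<sigma> = sets borel" and prob: "prob_space \<sigma>" and circle: "\<sigma> (sphere 0 1) = 1"
    and lim: "\<And>k. (\<lambda>N. complex_of_real (1 / real N * (\<Sum>n=1..N. tm (n + k) * tm n)))
      \<longlonglongrightarrow> (\<integral>z. cnj z ^ k \<partial>\<sigma>)"
    and sym: "\<And>k. (\<integral>z. z ^ k \<partial>\<sigma>) = (\<integral>z. cnj z ^ k \<partial>\<sigma>)"
    using assms unfolding TM_spectral_measure_def by auto
  have real: "(\<integral>z. cnj z ^ k \<partial>\<sigma>) = of_real (?\<gamma> k)" for k
  proof -
    have "(\<lambda>N. Im (complex_of_real (1 / real N * (\<Sum>n=1..N. tm (n + k) * tm n))))
        \<longlonglongrightarrow> Im (\<integral>z. cnj z ^ k \<partial>\<sigma>)"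
      by (rule tendsto_Im[OF lim])
    then have "Im (\<integral>z. cnj z ^ k \<partial>\<sigma>) = 0"
      by (simp add: LIMSEQ_const_iff)
    then show ?thesis
      by (simp add: complex_eq_iff)
  qed
  have "(\<lambda>N. tm_corr k N / real N) \<longlonglongrightarrow> ?\<gamma> k" for k
    using tendsto_Re[OF lim[of k]] by (intro tm_corr_average_tendsto) simp
  then have "tm_coeffs ?\<gamma>"
    by (rule tm_coeffs_if_tm_corr_tendsto)
  moreover have "AE z in \<sigma>. cmod z = 1"
  proof -
    have "measure \<sigma> (sphere 0 1) = 1"
      using circle by (simp add: measure_def)
    then have "AE z in \<sigma>. z \<in> sphere 0 1"
      by (rule prob_space.AE_prob_1[OF prob])
    then show ?thesis
      by eventually_elim simp
  qed
  moreover have "(\<integral>z. z ^ k \<partial>\<sigma>) = of_real (?\<gamma> k)" for k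
    unfolding sym by (rule real)
  ultimately show ?thesis
    using prob sets real by (intro tm_spectral.intro tm_spectral_axioms.intro)
qed

theorem corollary4p8:
  fixes \<sigma> :: "complex measure" and p q :: nat
  assumes "TM_spectral_measure \<sigma>"
    and "odd p" and "odd q" and "p \<noteq> q"
  shows "mutually_singular (power_image \<sigma> p) (power_image \<sigma> q)"
proof -
  interpret tm_spectral "\<lambda>k. Re (\<integral>z. cnj z ^ k \<partial>\<sigma>)" \<sigma>
    using assms(1) by (rule tm_spectral_if_TM_spectral_measure)
  show ?thesis
    using assms(2-4) by (rule mutually_singular_power_image)
qed

end
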